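(* Consider Algorithm 1 (described in the context) run on a strongly connected digraph $\mathcal{G}_d$ with edge bounds $1\le l_{ji}\le u_{ji}$, under any realization of transmission delays bounded by $\overline{\tau}<\infty$, and assume the integer circulation conditions hold: (i) $\lceil l_{ji}\rceil\le\lfloor u_{ji}\rfloor$ for every $(v_j,v_i)\in\mathcal{E}$, and (ii) for every $\mathcal{S}\subset\mathcal{V}$, $\sum_{(v_j,v_i)\in\mathcal{E}^-_{\mathcal{S}}}\lceil l_{ji}\rceil\le\sum_{(v_l,v_j)\in\mathcal{E}^+_{\mathcal{S}}}\lfloor u_{lj}\rfloor$. Then there exists $k_0$ such that for all $k\ge k_0$: $f_{ji}[k]=f_{ji}[k_0]$ with $l_{ji}\le f_{ji}[k]\le u_{ji}$ for every $(v_j,v_i)\in\mathcal{E}$, and $b_j[k]=0$ for every $v_j\in\mathcal{V}$.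
   Context: Setting: $\mathcal{G}_d=(\mathcal{V},\mathcal{E})$ is a strongly connected digraph, $\mathcal{V}=\{v_1,\dots,v_n\}$, $n\ge2$; an edge $(v_j,v_i)$ carries flow from $v_i$ to $v_j$. $\mathcal{N}_j^-=\{v_i:(v_j,v_i)\in\mathcal{E}\}$, $\mathcal{N}_j^+=\{v_l:(v_l,v_j)\in\mathcal{E}\}$, $\mathcal{D}_j=|\mathcal{N}_j^-|+|\mathcal{N}_j^+|$. For $\mathcal{S}\subset\mathcal{V}$: $\mathcal{E}^-_{\mathcal{S}}=\{(v_j,v_i)\in\mathcal{E}: v_j\in\mathcal{S},\ v_i\notin\mathcal{S}\}$, $\mathcal{E}^+_{\mathcal{S}}=\{(v_l,v_j)\in\mathcal{E}: v_j\in\mathcal{S},\ v_l\notin\mathcal{S}\}$. Each edge has real bounds $1\le l_{ji}\le u_{ji}$. Communication is bidirectional along every edge. Projection: $[x]_{ji}=\max\{\lceil l_{ji}\rceil,\min\{\lfloor u_{ji}\rfloor,x\}\}$. State: for each edge $(v_l,v_j)$, the tail $v_j$ holds the actual flow $f_{lj}[k]$; for each edge $(v_j,v_i)$, the head $v_j$ holds a perceived flow $f^{(p)}_{ji}[k]$. Actual balance $b_j[k]=\sum_{v_i\in\mathcal{N}_j^-}f_{ji}[k]-\sum_{v_l\in\mathcal{N}_j^+}f_{lj}[k]$; perceived balance $b^{(p)}_j[k]=\sum_{v_i\in\mathcal{N}_j^-}f^{(p)}_{ji}[k]-\sum_{v_l\in\mathcal{N}_j^+}f_{lj}[k]$. Algorithm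 1. Initialization: $f_{ji}[0]=f^{(p)}_{ji}[0]=\lceil l_{ji}\rceil$ for all edges; each $v_j$ fixes a cyclic order of its $\mathcal{D}_j$ incident (incoming and outgoing) edges and a pointer into it. Iteration $k=0,1,2,\dots$, at each node $v_j$: (1) compute $b^{(p)}_j[k]$. (2) If $b^{(p)}_j[k]>0$, starting at the pointer and cycling through the order, visit edges one at a time: at an outgoing edge $(v_l,v_j)$, if $f_{lj}[k]+c^{(j)}_{lj}[k]<\lfloor u_{lj}\rfloor$ add $1$ to $c^{(j)}_{lj}[k]$; at an incoming edge $(v_j,v_i)$, if $f^{(p)}_{ji}[k]+c^{(j)}_{ji}[k]>\lceil l_{ji}\rceil$ subtract $1$ from $c^{(j)}_{ji}[k]$ (the $c$'s start at $0$; edges at their limit are skipped); stop as soon as the total number of unit changes equals $b^{(p)}_j[k]$, leaving the pointer at the next edge. If $b^{(p)}_j[k]\le 0$, all $c^{(j)}[k]=0$. (3) $v_j$ transmits $c^{(j)}_{lj}[k]$ to each out-neighbor $v_l$ and $c^{(j)}_{ji}[k]$ to each in-neighbor $v_i$. A message sent at step $k$ over a link in a given direction is delivered at step $k+\tau$, where the integer $\tau\in[0,\overline{\tau}]$ is arbitrary (unknown, time-varying, independent across links and directions). (4) $v_j$ forms $\overline{c}^{(l)}_{lj}[k]$ (resp. $\overline{c}^{(i)}_{ji}[k]$) as the sum of all values $c^{(l)}_{lj}[k_0]$ (resp. $c^{(i)}_{ji}[k_0]$) sent by $v_l$ (resp. $v_i$) that are delivered at step $k$ (zero if none). (5)–(6)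 $f_{lj}[k+1]=[f_{lj}[k]+c^{(j)}_{lj}[k]+\overline{c}^{(l)}_{lj}[k]]_{lj}$ and $f^{(p)}_{ji}[k+1]=[f^{(p)}_{ji}[k]+c^{(j)}_{ji}[k]+\overline{c}^{(i)}_{ji}[k]]_{ji}$. *)

theory Defs
  imports Complex_Main
begin

text \<open>An edge (j,i) in E carries flow from i to j; i is its tail, j its head.
  Flows on edges are functions of type ('v \<times> 'v) \<Rightarrow> int (only values on E matter).\<close>

text \<open>Entries of a node's cyclic order of incident edges:
  at node j, OutE v stands for the outgoing edge (v,j), InE v for the incoming edge (j,v).\<close>
datatype 'v inc = OutE 'v | InE 'v

definition incident :: "('v \<times> 'v) set \<Rightarrow> 'v \<Rightarrow> 'v inc set" where
  "incident E j = {OutE v | v. (v, j) \<in> E} \<union> {InE v | v. (j, v) \<in> E}"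

definition proj :: "real \<Rightarrow> real \<Rightarrow> int \<Rightarrow> int" where
  "proj lo up x = max \<lceil>lo\<rceil> (min \<lfloor>up\<rfloor> x)"

definition bal :: "('v \<times> 'v) set \<Rightarrow> ('v \<times> 'v \<Rightarrow> int) \<Rightarrow> 'v \<Rightarrow> int" where
  "bal E f j = (\<Sum>i\<in>{i. (j, i) \<in> E}. f (j, i)) - (\<Sum>v\<in>{v. (v, j) \<in> E}. f (v, j))"

definition pbal :: "('v \<times> 'v) set \<Rightarrow> ('v \<times> 'v \<Rightarrow> int) \<Rightarrow> ('v \<times> 'v \<Rightarrow> int) \<Rightarrow> 'v \<Rightarrow> int" where
  "pbal E f fp j = (\<Sum>i\<in>{i. (j, i) \<in> E}. fp (j, i)) - (\<Sum>v\<in>{v. (v, j) \<in> E}. f (v, j))"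

text \<open>Number of unit changes still admissible on an incident entry of node j
  (increments for an outgoing edge up to floor u, decrements of the perceived flow of an
  incoming edge down to ceil l).\<close>
definition room :: "('v \<times> 'v \<Rightarrow> real) \<Rightarrow> ('v \<times> 'v \<Rightarrow> real) \<Rightarrow> ('v \<times> 'v \<Rightarrow> int)
    \<Rightarrow> ('v \<times> 'v \<Rightarrow> int) \<Rightarrow> 'v \<Rightarrow> 'v inc \<Rightarrow> int" where
  "room l u f fp j e = (case e of OutE v \<Rightarrow> \<lfloor>u (v, j)\<rfloor> - f (v, j)
                                | InE v \<Rightarrow> fp (j, v) - \<lceil>l (j, v)\<rceil>)"

text \<open>Cyclic traversal: trav r xs p b t = (unit counts per entry, total count) after t visits,
  starting at position p of the cyclic order xs, with room r and target b.\<close>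
primrec trav :: "('a \<Rightarrow> int) \<Rightarrow> 'a list \<Rightarrow> nat \<Rightarrow> int \<Rightarrow> nat \<Rightarrow> ('a \<Rightarrow> int) \<times> int" where
  "trav r xs p b 0 = ((\<lambda>_. 0), 0)"
| "trav r xs p b (Suc t) =
     (let cs = trav r xs p b t; c = fst cs; s = snd cs; e = xs ! ((p + t) mod length xs) in
      if s < b \<and> c e < r e then (c(e := c e + 1), s + 1) else (c, s))"

text \<open>Unit counts chosen by node j in step (2) (pointer p).  length xs * b visits suffice
  for the traversal to stop whenever it stops at all.\<close>
definition units :: "('v \<times> 'v \<Rightarrow> real) \<Rightarrow> ('v \<times> 'v \<Rightarrow> real) \<Rightarrow> ('v \<times> 'v) set
    \<Rightarrow> ('v \<Rightarrow> 'v inc list) \<Rightarrow> ('v \<times> 'v \<Rightarrow> int) \<Rightarrow> ('v \<times> 'v \<Rightarrow> int) \<Rightarrow> nat \<Rightarrow> 'v \<Rightarrow> 'v inc \<Rightarrow> int" where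
  "units l u E ord f fp p j =
     (let b = pbal E f fp j in
      if b > 0 then fst (trav (room l u f fp j) (ord j) p b (length (ord j) * nat b))
      else (\<lambda>_. 0))"

text \<open>New pointer: the entry following the one at which the last unit change was made.\<close>
definition newptr :: "('v \<times> 'v \<Rightarrow> real) \<Rightarrow> ('v \<times> 'v \<Rightarrow> real) \<Rightarrow> ('v \<times> 'v) set
    \<Rightarrow> ('v \<Rightarrow> 'v inc list) \<Rightarrow> ('v \<times> 'v \<Rightarrow> int) \<Rightarrow> ('v \<times> 'v \<Rightarrow> int) \<Rightarrow> nat \<Rightarrow> 'v \<Rightarrow> nat" where
  "newptr l u E ord f fp p j =
     (let b = pbal E f fp j in
      if b > 0 then (p + (LEAST t. snd (trav (room l u f fp j) (ord j) p b t) = b)) mod length (ord j)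
      else p)"

text \<open>A run of Algorithm 1 with initial pointers p0 and delays dT (messages from the tail i
  to the head j of edge (j,i), i.e. the values c^(i)_ji) and dH (messages from the head j to
  the tail i, i.e. the values c^(j)_ji), sent at step k on edge e and delivered at step k + delay.
  tchg k (j,i) = c^(i)_ji[k] (change by the tail to its actual flow),
  hchg k (j,i) = c^(j)_ji[k] (change by the head to its perceived flow).\<close>
definition is_run :: "('v \<times> 'v \<Rightarrow> real) \<Rightarrow> ('v \<times> 'v \<Rightarrow> real) \<Rightarrow> ('v \<times> 'v) set
    \<Rightarrow> ('v \<Rightarrow> 'v inc list) \<Rightarrow> ('v \<Rightarrow> nat) \<Rightarrow> (nat \<Rightarrow> 'v \<times> 'v \<Rightarrow> nat) \<Rightarrow> (nat \<Rightarrow> 'v \<times> 'v \<Rightarrow> nat)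
    \<Rightarrow> (nat \<Rightarrow> 'v \<times> 'v \<Rightarrow> int) \<Rightarrow> (nat \<Rightarrow> 'v \<times> 'v \<Rightarrow> int) \<Rightarrow> (nat \<Rightarrow> 'v \<Rightarrow> nat) \<Rightarrow> bool" where
  "is_run l u E ord p0 dT dH f fp ptr \<longleftrightarrow>
     (let tchg = (\<lambda>k (j, i). units l u E ord (f k) (fp k) (ptr k i) i (OutE j));
          hchg = (\<lambda>k (j, i). - units l u E ord (f k) (fp k) (ptr k j) j (InE i)) in
     (\<forall>e\<in>E. f 0 e = \<lceil>l e\<rceil> \<and> fp 0 e = \<lceil>l e\<rceil>) \<and>
     ptr 0 = p0 \<and>
     (\<forall>k j. ptr (Suc k) j = newptr l u E ord (f k) (fp k) (ptr k j) j) \<and>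
     (\<forall>k. \<forall>e\<in>E.
        f (Suc k) e = proj (l e) (u e)
          (f k e + tchg k e + (\<Sum>k0\<in>{k0. k0 \<le> k \<and> k0 + dH k0 e = k}. hchg k0 e)) \<and>
        fp (Suc k) e = proj (l e) (u e)
          (fp k e + hchg k e + (\<Sum>k0\<in>{k0. k0 \<le> k \<and> k0 + dT k0 e = k}. tchg k0 e))))"

end

theory Submission
  imports Defs
begin

text \<open>
  The projections of Algorithm 1 never bind, so every actual flow is its lower bound plus the
  increments sent minus the decrements delivered, and dually for the perceived flows; in
  particular f \<ge> fp, the difference being the messages in flight.  A node only ever spends
  a positive perceived balance, and at most all of it, so the deficit
  D[k] = \<Sigma>_j max(-b^(p)_j[k], 0) is a non-increasing natural number and eventually constant.

  If D vanishes, all perceived balances are nonnegative while their total is minus the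
  in-flight amount, so nothing is in flight, all balances are 0 and the flows stop moving.

  Otherwise let A be the set of nodes with positive perceived balance infinitely often.
  While D is constant a node with negative balance receives nothing, so nodes of A stay
  nonnegative while the others become nonpositive and silent; edges not inside A then fall
  silent and freeze.  An active node visits all its entries cyclically, so it cannot skip one
  with room forever: edges into A end at their lower and edges out of A at their upper
  bounds.  Then D is the net inflow into A, which condition (ii) makes nonpositive.
\<close>

section \<open>Cyclic traversal and pointer update\<close>

lemma trav_count_nonneg: "0 \<le> fst (trav r xs p b t) x"
  by (induction t) (auto simp: Let_def)

lemma trav_count_le_room: "fst (trav r xs p b t) x \<le> max 0 (r x)"
  by (induction t) (auto simp: Let_def)

lemma trav_total_le: "snd (trav r xs p b t) \<le> max 0 b"
  by (induction t) (auto simp: Let_def)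

lemma trav_count_mono:
  assumes "t \<le> t'"
  shows "fst (trav r xs p b t) x \<le> fst (trav r xs p b t') x"
  using assms
proof (induction t' rule: dec_induct)
  case (step t')
  then show ?case by (auto simp: Let_def)
qed simp

lemma sum_trav_count:
  assumes "finite A" "xs \<noteq> []" "set xs \<subseteq> A"
  shows "(\<Sum>x\<in>A. fst (trav r xs p b t) x) = snd (trav r xs p b t)"
proof (induction t)
  case (Suc t)
  let ?c = "fst (trav r xs p b t)" and ?y = "xs ! ((p + t) mod length xs)"
  have "?y \<in> A"
    using assms by (auto intro!: nth_mem)
  then have "(\<Sum>x\<in>A. (?c(?y := ?c ?y + 1)) x) = (\<Sum>x\<in>A. ?c x) + 1"
    using assms(1) by (simp add: sum.remove[of A ?y] sum.cong[of "A - {?y}" _ "?c(?y := ?c ?y + 1)" ?c])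
  with Suc show ?case
    by (auto simp: Let_def)
qed simp

lemma trav_target_reached_before_untouched:
  assumes room: "0 < r x" and at_x: "xs ! ((p + t) mod length xs) = x" and "t < T"
    and untouched: "fst (trav r xs p b T) x = 0"
  shows "b \<le> snd (trav r xs p b t)"
proof (rule ccontr)
  assume "\<not> b \<le> snd (trav r xs p b t)"
  moreover have "fst (trav r xs p b t) x = 0"
    using trav_count_mono[of t T] trav_count_nonneg[of r xs p b t x] untouched \<open>t < T\<close>
    by (metis order.order_iff_strict order_antisym)
  ultimately have "fst (trav r xs p b (Suc t)) x = 1"
    using room at_x by (simp add: Let_def)
  moreover have "fst (trav r xs p b (Suc t)) x \<le> fst (trav r xs p b T) x"
    using \<open>t < T\<close> by (intro trav_count_mono) simp
  ultimately show False
    using untouched by simp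
qed

lemma proj_bounds: "\<lceil>lo\<rceil> \<le> \<lfloor>up\<rfloor> \<Longrightarrow> \<lceil>lo\<rceil> \<le> proj lo up x \<and> proj lo up x \<le> \<lfloor>up\<rfloor>"
  by (auto simp: proj_def)

lemma proj_id: "\<lceil>lo\<rceil> \<le> x \<Longrightarrow> x \<le> \<lfloor>up\<rfloor> \<Longrightarrow> proj lo up x = x"
  by (auto simp: proj_def)

lemma units_nonneg: "0 \<le> units l u E ord F Fp p j x"
  by (auto simp: units_def Let_def trav_count_nonneg)

lemma units_le_room: "units l u E ord F Fp p j x \<le> max 0 (room l u F Fp j x)"
  by (auto simp: units_def Let_def trav_count_le_room)

lemma units_eq_0: "pbal E F Fp j \<le> 0 \<Longrightarrow> units l u E ord F Fp p j x = 0"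
  by (auto simp: units_def Let_def)

lemma newptr_eq: "pbal E F Fp j \<le> 0 \<Longrightarrow> newptr l u E ord F Fp p j = p"
  by (auto simp: newptr_def Let_def)

lemma finite_heads: "finite E \<Longrightarrow> finite {i. (j, i) \<in> E}"
  by (rule finite_subset[of _ "snd ` E"]) (auto intro: rev_image_eqI)

lemma finite_tails: "finite E \<Longrightarrow> finite {v. (v, j) \<in> E}"
  by (rule finite_subset[of _ "fst ` E"]) (auto intro: rev_image_eqI)

lemma incident_eq: "incident E j = OutE ` {v. (v, j) \<in> E} \<union> InE ` {i. (j, i) \<in> E}"
  by (auto simp: incident_def)

lemma finite_incident: "finite E \<Longrightarrow> finite (incident E j)"
  by (simp add: incident_eq finite_heads finite_tails)

lemma sum_incident:
  assumes "finite E"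
  shows "(\<Sum>x\<in>incident E j. g x) = (\<Sum>v\<in>{v. (v, j) \<in> E}. g (OutE v)) + (\<Sum>i\<in>{i. (j, i) \<in> E}. g (InE i))"
proof -
  have "(\<Sum>x\<in>incident E j. g x) = (\<Sum>x\<in>OutE ` {v. (v, j) \<in> E}. g x) + (\<Sum>x\<in>InE ` {i. (j, i) \<in> E}. g x)"
    unfolding incident_eq using assms by (intro sum.union_disjoint) (auto simp: finite_heads finite_tails)
  also have "\<dots> = (\<Sum>v\<in>{v. (v, j) \<in> E}. g (OutE v)) + (\<Sum>i\<in>{i. (j, i) \<in> E}. g (InE i))"
    by (simp add: sum.reindex inj_on_def)
  finally show ?thesis .
qed

lemma sum_units_le_pbal:
  assumes "finite E" "set (ord j) = incident E j" "0 < pbal E F Fp j"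
  shows "(\<Sum>x\<in>incident E j. units l u E ord F Fp p j x) \<le> pbal E F Fp j"
proof -
  have "incident E j \<noteq> {}"
  proof
    assume "incident E j = {}"
    then have "pbal E F Fp j = 0"
      by (simp add: pbal_def incident_eq)
    with assms(3) show False
      by simp
  qed
  then have "ord j \<noteq> []"
    using assms(2) by auto
  then have "(\<Sum>x\<in>incident E j. units l u E ord F Fp p j x)
      = snd (trav (room l u F Fp j) (ord j) p (pbal E F Fp j) (length (ord j) * nat (pbal E F Fp j)))"
    using assms by (simp add: units_def Let_def sum_trav_count finite_incident)
  also have "\<dots> \<le> pbal E F Fp j"
    using trav_total_le assms(3) by (metis max.absorb2 order.strict_implies_order)
  finally show ?thesis .
qed

lemma add_cyclic_distance_mod:
  assumes "pos < (n::nat)"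
  shows "(p + nat ((int pos - int p) mod int n)) mod n = pos"
proof -
  have "int ((p + nat ((int pos - int p) mod int n)) mod n) = (int p + (int pos - int p)) mod int n"
    using assms by (simp add: zmod_int mod_add_right_eq)
  then show ?thesis
    using assms by simp
qed

text \<open>(int pos - int p) mod length (ord j) is the cyclic distance from the pointer p to the
  skipped entry at position pos.\<close>
lemma newptr_advance:
  assumes pos: "0 < pbal E F Fp j" and x: "pos < length (ord j)" "ord j ! pos = x"
    and room: "0 < room l u F Fp j x" and untouched: "units l u E ord F Fp p j x = 0"
  obtains t where "0 < t" "int t \<le> (int pos - int p) mod int (length (ord j))"
    "newptr l u E ord F Fp p j = (p + t) mod length (ord j)"
proof -
  define n where "n = length (ord j)"
  define b where "b = pbal E F Fp j"
  define tr where "tr t = trav (room l u F Fp j) (ord j) p b t" for t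
  define d where "d = nat ((int pos - int p) mod int n)"
  have n: "0 < n"
    using x(1) unfolding n_def by linarith
  have d: "d < n" "int d = (int pos - int p) mod int n"
    using n by (simp_all add: d_def nat_less_iff)
  have "(p + d) mod n = pos"
    using x(1) unfolding d_def n_def by (rule add_cyclic_distance_mod)
  moreover have "d < n * nat b"
  proof -
    have "n * 1 \<le> n * nat b"
      using pos by (intro mult_le_mono2) (simp add: b_def)
    with d(1) show ?thesis
      by linarith
  qed
  moreover have "fst (tr (n * nat b)) x = 0"
    using untouched pos by (simp add: units_def Let_def tr_def b_def n_def)
  ultimately have "b \<le> snd (tr d)"
    using room x unfolding tr_def n_def by (intro trav_target_reached_before_untouched) auto
  then have reached: "snd (tr d) = b"
    using trav_total_le[of "room l u F Fp j" "ord j" p b d] pos unfolding tr_def b_def by simp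
  define t where "t = (LEAST t. snd (tr t) = b)"
  have "t \<le> d"
    unfolding t_def using reached by (rule Least_le)
  moreover have "snd (tr t) = b"
    unfolding t_def using reached by (rule LeastI)
  then have "0 < t"
    using pos by (cases t) (auto simp: tr_def b_def)
  moreover have "newptr l u E ord F Fp p j = (p + t) mod n"
    using pos by (simp add: newptr_def Let_def t_def tr_def b_def n_def)
  ultimately show thesis
    using that d(2) unfolding n_def by auto
qed

lemma eventually_not_by_descent:
  fixes d :: "nat \<Rightarrow> int"
  assumes descent: "\<And>k. K \<le> k \<Longrightarrow> d (Suc k) \<le> d k - (if P k then 1 else 0)"
    and nonneg: "\<And>k. 0 \<le> d k"
  shows "\<forall>\<^sub>F k in sequentially. \<not> P k"
proof (rule ccontr)
  assume "\<not> ?thesis"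
  then have often: "\<exists>k'\<ge>k. P k'" for k
    by (auto simp: eventually_sequentially)
  have antimono: "d k' \<le> d k" if "K \<le> k" "k \<le> k'" for k k'
    using that(2,1) by (induction k' rule: dec_induct) (auto intro: order_trans[OF descent])
  have "\<exists>k\<ge>K. d k \<le> d K - int m" for m
  proof (induction m)
    case (Suc m)
    then obtain k where k: "K \<le> k" "d k \<le> d K - int m"
      by auto
    obtain k' where k': "k \<le> k'" "P k'"
      using often by blast
    have "d (Suc k') < d k'"
      using descent[of k'] k k' by simp
    moreover have "d k' \<le> d k"
      using antimono k k' by simp
    ultimately show ?case
      using k k' by (intro exI[of _ "Suc k'"]) auto
  qed auto
  then obtain k where "d k \<le> d K - int (nat (d K) + 1)"
    by blast
  then show False
    using nonneg[of k] nonneg[of K] by simp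
qed

section \<open>Delayed messages\<close>

definition delivered :: "(nat \<Rightarrow> nat) \<Rightarrow> (nat \<Rightarrow> int) \<Rightarrow> nat \<Rightarrow> int" where
  "delivered d g k = (\<Sum>k0 | k0 + d k0 < k. g k0)"

definition arriving :: "(nat \<Rightarrow> nat) \<Rightarrow> (nat \<Rightarrow> int) \<Rightarrow> nat \<Rightarrow> int" where
  "arriving d g k = (\<Sum>k0 | k0 \<le> k \<and> k0 + d k0 = k. g k0)"

lemma finite_delivered_steps: "finite {k0. k0 + d k0 < (k::nat)}"
  by (rule finite_subset[of _ "{..<k}"]) auto

lemma finite_arriving_steps: "finite {k0. k0 \<le> k \<and> k0 + d k0 = (k::nat)}"
  by (rule finite_subset[of _ "{..k}"]) auto

lemma delivered_0 [simp]: "delivered d g 0 = 0"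
  by (simp add: delivered_def)

lemma delivered_Suc: "delivered d g (Suc k) = delivered d g k + arriving d g k"
proof -
  have "{k0. k0 + d k0 < Suc k} = {k0. k0 + d k0 < k} \<union> {k0. k0 \<le> k \<and> k0 + d k0 = k}"
    by auto
  then show ?thesis
    unfolding delivered_def arriving_def
    by (simp, intro sum.union_disjoint) (auto simp: finite_delivered_steps finite_arriving_steps)
qed

lemma arriving_nonneg: "(\<And>k. 0 \<le> g k) \<Longrightarrow> 0 \<le> arriving d g k"
  by (simp add: arriving_def sum_nonneg)

lemma le_arriving: "(\<And>k. 0 \<le> g k) \<Longrightarrow> g k \<le> arriving d g (k + d k)"
  unfolding arriving_def by (rule member_le_sum) (auto simp: finite_arriving_steps)

lemma delivered_le_sent: "(\<And>k. 0 \<le> g k) \<Longrightarrow> delivered d g k \<le> (\<Sum>k0<k. g k0)"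
  unfolding delivered_def by (rule sum_mono2) auto

lemma eventually_delivered_eq_sent:
  assumes "\<forall>\<^sub>F k in sequentially. g k = 0" and "\<And>k. d k \<le> \<tau>"
  shows "\<forall>\<^sub>F k in sequentially. delivered d g k = (\<Sum>k0<k. g k0)"
proof -
  obtain K where K: "\<And>k. K \<le> k \<Longrightarrow> g k = 0"
    using assms(1) by (auto simp: eventually_sequentially)
  have "delivered d g k = (\<Sum>k0<k. g k0)" if "K + \<tau> < k" for k
    unfolding delivered_def
  proof (rule sum.mono_neutral_left)
    show "\<forall>k0\<in>{..<k} - {k0. k0 + d k0 < k}. g k0 = 0"
    proof
      fix k0
      assume "k0 \<in> {..<k} - {k0. k0 + d k0 < k}"
      then have "K \<le> k0"
        using assms(2)[of k0] that by auto
      then show "g k0 = 0"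
        by (rule K)
    qed
  qed auto
  then show ?thesis
    by (auto simp: eventually_sequentially intro: exI[of _ "Suc (K + \<tau>)"])
qed

lemma eventually_arriving_eq_0:
  assumes "\<forall>\<^sub>F k in sequentially. g k = 0" and "\<And>k. d k \<le> \<tau>"
  shows "\<forall>\<^sub>F k in sequentially. arriving d g k = 0"
proof -
  obtain K where K: "\<And>k. K \<le> k \<Longrightarrow> g k = 0"
    using assms(1) by (auto simp: eventually_sequentially)
  have "arriving d g k = 0" if "K + \<tau> \<le> k" for k
    unfolding arriving_def
  proof (intro sum.neutral ballI)
    fix k0
    assume "k0 \<in> {k0. k0 \<le> k \<and> k0 + d k0 = k}"
    then have "K \<le> k0"
      using assms(2)[of k0] that by auto
    then show "g k0 = 0"
      by (rule K)
  qed
  then show ?thesis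
    by (auto simp: eventually_sequentially)
qed

section \<open>Balances of node sets\<close>

lemma sum_out_edges:
  assumes "finite S" "finite E"
  shows "(\<Sum>j\<in>S. \<Sum>i | (j, i) \<in> E. g (j, i)) = (\<Sum>e | e \<in> E \<and> fst e \<in> S. g e)"
proof -
  have "(\<Sum>j\<in>S. \<Sum>i | (j, i) \<in> E. g (j, i)) = (\<Sum>e\<in>Sigma S (\<lambda>j. {i. (j, i) \<in> E}). g e)"
    using assms by (simp add: sum.Sigma finite_heads)
  also have "Sigma S (\<lambda>j. {i. (j, i) \<in> E}) = {e. e \<in> E \<and> fst e \<in> S}"
    by auto
  finally show ?thesis .
qed

lemma sum_in_edges:
  assumes "finite S" "finite E"
  shows "(\<Sum>j\<in>S. \<Sum>v | (v, j) \<in> E. g (v, j)) = (\<Sum>e | e \<in> E \<and> snd e \<in> S. g e)"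
proof -
  have "(\<Sum>j\<in>S. \<Sum>v | (v, j) \<in> E. g (v, j)) = (\<Sum>(j, v)\<in>Sigma S (\<lambda>j. {v. (v, j) \<in> E}). g (v, j))"
    using assms by (simp add: sum.Sigma finite_tails)
  also have "\<dots> = (\<Sum>e\<in>prod.swap ` Sigma S (\<lambda>j. {v. (v, j) \<in> E}). g e)"
    by (subst sum.reindex) (auto simp: case_prod_beta' prod.swap_def)
  also have "prod.swap ` Sigma S (\<lambda>j. {v. (v, j) \<in> E}) = {e. e \<in> E \<and> snd e \<in> S}"
    by (auto simp: image_iff)
  finally show ?thesis .
qed

lemma sum_bal_eq_cut:
  assumes "finite S" "finite E"
  shows "(\<Sum>j\<in>S. bal E F j)
    = (\<Sum>e\<in>{(j, i) \<in> E. j \<in> S \<and> i \<notin> S}. F e) - (\<Sum>e\<in>{(v, j) \<in> E. j \<in> S \<and> v \<notin> S}. F e)"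
proof -
  let ?inner = "{e. e \<in> E \<and> fst e \<in> S \<and> snd e \<in> S}"
    and ?into = "{(j, i) \<in> E. j \<in> S \<and> i \<notin> S}" and ?out = "{(v, j) \<in> E. j \<in> S \<and> v \<notin> S}"
  have finite: "finite ?inner" "finite ?into" "finite ?out"
    by (rule finite_subset[OF _ assms(2)]; auto)+
  have "{e. e \<in> E \<and> fst e \<in> S} = ?inner \<union> ?into"
    by auto
  then have into: "(\<Sum>e | e \<in> E \<and> fst e \<in> S. F e) = (\<Sum>e\<in>?inner. F e) + (\<Sum>e\<in>?into. F e)"
    using finite by (simp add: sum.union_disjoint disjoint_iff)
  have "{e. e \<in> E \<and> snd e \<in> S} = ?inner \<union> ?out"
    by auto
  then have out: "(\<Sum>e | e \<in> E \<and> snd e \<in> S. F e) = (\<Sum>e\<in>?inner. F e) + (\<Sum>e\<in>?out. F e)"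
    using finite by (simp add: sum.union_disjoint disjoint_iff)
  have "(\<Sum>j\<in>S. bal E F j) = (\<Sum>e | e \<in> E \<and> fst e \<in> S. F e) - (\<Sum>e | e \<in> E \<and> snd e \<in> S. F e)"
    using assms by (simp add: bal_def sum_subtractf sum_out_edges sum_in_edges)
  then show ?thesis
    unfolding into out by simp
qed

lemma sum_bal_eq_0:
  assumes "finite V" "E \<subseteq> V \<times> V"
  shows "(\<Sum>j\<in>V. bal E F j) = 0"
proof -
  have "finite E"
    using assms finite_subset by blast
  moreover have "{(j, i) \<in> E. j \<in> V \<and> i \<notin> V} = {}" "{(v, j) \<in> E. j \<in> V \<and> v \<notin> V} = {}"
    using assms(2) by auto
  ultimately show ?thesis
    using sum_bal_eq_cut[OF assms(1), of E F] by (simp only: sum.empty diff_self)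
qed

lemma sum_pbal:
  assumes "finite V" "E \<subseteq> V \<times> V"
  shows "(\<Sum>j\<in>V. pbal E F Fp j) = (\<Sum>e\<in>E. Fp e) - (\<Sum>e\<in>E. F e)"
proof -
  have "finite E"
    using assms finite_subset by blast
  moreover have "{e. e \<in> E \<and> fst e \<in> V} = E" "{e. e \<in> E \<and> snd e \<in> V} = E"
    using assms(2) by auto
  ultimately show ?thesis
    using assms(1) by (simp add: pbal_def sum_subtractf sum_out_edges sum_in_edges)
qed

section \<open>Runs of Algorithm 1\<close>

locale flow_run =
  fixes V :: "'v set" and E :: "('v \<times> 'v) set"
    and l u :: "'v \<times> 'v \<Rightarrow> real"
    and ord :: "'v \<Rightarrow> 'v inc list" and p0 :: "'v \<Rightarrow> nat"
    and taubar :: nat and dT dH :: "nat \<Rightarrow> 'v \<times> 'v \<Rightarrow> nat"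
    and f fp :: "nat \<Rightarrow> 'v \<times> 'v \<Rightarrow> int" and ptr :: "nat \<Rightarrow> 'v \<Rightarrow> nat"
  assumes finite_V: "finite V"
    and edges_V: "E \<subseteq> V \<times> V"
    and ord_incident: "\<forall>j\<in>V. set (ord j) = incident E j"
    and delays: "\<forall>k e. dT k e \<le> taubar \<and> dH k e \<le> taubar"
    and int_bounds: "\<forall>e\<in>E. \<lceil>l e\<rceil> \<le> \<lfloor>u e\<rfloor>"
    and run: "is_run l u E ord p0 dT dH f fp ptr"
begin

lemma finite_E: "finite E"
  using finite_V edges_V by (meson finite_SigmaI finite_subset)

text \<open>For e = (j,i), incr k e is the paper's c^(i)_ji[k] (sent by the tail i) and decr k e is
  -c^(j)_ji[k] (sent by the head j).\<close>
definition incr :: "nat \<Rightarrow> 'v \<times> 'v \<Rightarrow> int" where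
  "incr k = (\<lambda>(j, i). units l u E ord (f k) (fp k) (ptr k i) i (OutE j))"

definition decr :: "nat \<Rightarrow> 'v \<times> 'v \<Rightarrow> int" where
  "decr k = (\<lambda>(j, i). units l u E ord (f k) (fp k) (ptr k j) j (InE i))"

abbreviation incr_sent :: "nat \<Rightarrow> 'v \<times> 'v \<Rightarrow> int" where
  "incr_sent k e \<equiv> \<Sum>k0<k. incr k0 e"
abbreviation decr_sent :: "nat \<Rightarrow> 'v \<times> 'v \<Rightarrow> int" where
  "decr_sent k e \<equiv> \<Sum>k0<k. decr k0 e"
abbreviation incr_delivered :: "nat \<Rightarrow> 'v \<times> 'v \<Rightarrow> int" where
  "incr_delivered k e \<equiv> delivered (\<lambda>k0. dT k0 e) (\<lambda>k0. incr k0 e) k"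
abbreviation decr_delivered :: "nat \<Rightarrow> 'v \<times> 'v \<Rightarrow> int" where
  "decr_delivered k e \<equiv> delivered (\<lambda>k0. dH k0 e) (\<lambda>k0. decr k0 e) k"
abbreviation incr_arriving :: "nat \<Rightarrow> 'v \<times> 'v \<Rightarrow> int" where
  "incr_arriving k e \<equiv> arriving (\<lambda>k0. dT k0 e) (\<lambda>k0. incr k0 e) k"
abbreviation decr_arriving :: "nat \<Rightarrow> 'v \<times> 'v \<Rightarrow> int" where
  "decr_arriving k e \<equiv> arriving (\<lambda>k0. dH k0 e) (\<lambda>k0. decr k0 e) k"

lemma incr_nonneg [simp]: "0 \<le> incr k e"
  by (cases e) (simp add: incr_def units_nonneg)

lemma decr_nonneg [simp]: "0 \<le> decr k e"
  by (cases e) (simp add: decr_def units_nonneg)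

lemma flow_0: "e \<in> E \<Longrightarrow> f 0 e = \<lceil>l e\<rceil> \<and> fp 0 e = \<lceil>l e\<rceil>"
  using run by (auto simp: is_run_def Let_def)

lemma ptr_Suc: "ptr (Suc k) j = newptr l u E ord (f k) (fp k) (ptr k j) j"
  using run by (auto simp: is_run_def Let_def)

lemma f_Suc_proj:
  "e \<in> E \<Longrightarrow> f (Suc k) e = proj (l e) (u e) (f k e + incr k e - decr_arriving k e)"
  using run by (cases e) (auto simp: is_run_def Let_def incr_def decr_def arriving_def sum_negf)

lemma fp_Suc_proj:
  "e \<in> E \<Longrightarrow> fp (Suc k) e = proj (l e) (u e) (fp k e - decr k e + incr_arriving k e)"
  using run by (cases e) (auto simp: is_run_def Let_def incr_def decr_def arriving_def)

lemma flows_in_bounds: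
  assumes "e \<in> E"
  shows "\<lceil>l e\<rceil> \<le> f k e \<and> f k e \<le> \<lfloor>u e\<rfloor> \<and> \<lceil>l e\<rceil> \<le> fp k e \<and> fp k e \<le> \<lfloor>u e\<rfloor>"
proof (cases k)
  case 0
  then show ?thesis
    using assms flow_0 int_bounds by auto
next
  case (Suc k')
  then show ?thesis
    using proj_bounds int_bounds assms f_Suc_proj fp_Suc_proj by metis
qed

lemma incr_le_room:
  assumes "(j, i) \<in> E"
  shows "incr k (j, i) \<le> \<lfloor>u (j, i)\<rfloor> - f k (j, i)"
proof -
  have "incr k (j, i) \<le> max 0 (room l u (f k) (fp k) i (OutE j))"
    by (simp add: incr_def units_le_room)
  then show ?thesis
    using flows_in_bounds[OF assms, of k] by (simp add: room_def)
qed

lemma decr_le_room: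
  assumes "(j, i) \<in> E"
  shows "decr k (j, i) \<le> fp k (j, i) - \<lceil>l (j, i)\<rceil>"
proof -
  have "decr k (j, i) \<le> max 0 (room l u (f k) (fp k) j (InE i))"
    by (simp add: decr_def units_le_room)
  then show ?thesis
    using flows_in_bounds[OF assms, of k] by (simp add: room_def)
qed

text \<open>The projections never bind: a decrement of f was first applied to fp, which stays
  above the lower bound, and an increment of fp was first applied to f, which stays below
  the upper bound.\<close>
lemma flows_eq_message_totals:
  assumes "e \<in> E"
  shows "f k e = \<lceil>l e\<rceil> + incr_sent k e - decr_delivered k e
    \<and> fp k e = \<lceil>l e\<rceil> + incr_delivered k e - decr_sent k e"
proof (induction k)
  case 0
  then show ?case
    using flow_0 assms by simp
next
  case (Suc k)
  obtain j i where e: "e = (j, i)"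
    by (cases e)
  have "decr_delivered (Suc k) e \<le> decr_sent (Suc k) e"
    "incr_delivered (Suc k) e \<le> incr_sent (Suc k) e"
    "incr_delivered k e \<le> incr_sent k e"
    by (rule delivered_le_sent, simp)+
  moreover have "0 \<le> incr_arriving k e" "0 \<le> decr_arriving k e"
    by (rule arriving_nonneg, simp)+
  moreover note Suc.IH incr_le_room[of j i k] decr_le_room[of j i k]
  ultimately have "\<lceil>l e\<rceil> \<le> f k e + incr k e - decr_arriving k e"
    "f k e + incr k e - decr_arriving k e \<le> \<lfloor>u e\<rfloor>"
    "\<lceil>l e\<rceil> \<le> fp k e - decr k e + incr_arriving k e"
    "fp k e - decr k e + incr_arriving k e \<le> \<lfloor>u e\<rfloor>"
    using assms unfolding e by (simp_all add: delivered_Suc)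
  then show ?case
    using Suc.IH f_Suc_proj[OF assms, of k] fp_Suc_proj[OF assms, of k]
    by (simp add: delivered_Suc proj_id)
qed

lemma f_Suc: "e \<in> E \<Longrightarrow> f (Suc k) e = f k e + incr k e - decr_arriving k e"
  using flows_eq_message_totals[of e k] flows_eq_message_totals[of e "Suc k"] by (simp add: delivered_Suc)

lemma fp_Suc: "e \<in> E \<Longrightarrow> fp (Suc k) e = fp k e - decr k e + incr_arriving k e"
  using flows_eq_message_totals[of e k] flows_eq_message_totals[of e "Suc k"] by (simp add: delivered_Suc)

lemma fp_le_f: "e \<in> E \<Longrightarrow> fp k e \<le> f k e"
  using flows_eq_message_totals[of e k] delivered_le_sent[of "\<lambda>k0. incr k0 e" "\<lambda>k0. dT k0 e" k]
    delivered_le_sent[of "\<lambda>k0. decr k0 e" "\<lambda>k0. dH k0 e" k]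
  by simp

abbreviation pb :: "nat \<Rightarrow> 'v \<Rightarrow> int" where
  "pb k j \<equiv> pbal E (f k) (fp k) j"

definition spent :: "nat \<Rightarrow> 'v \<Rightarrow> int" where
  "spent k j = (\<Sum>x\<in>incident E j. units l u E ord (f k) (fp k) (ptr k j) j x)"

definition received :: "nat \<Rightarrow> 'v \<Rightarrow> int" where
  "received k j = (\<Sum>i | (j, i) \<in> E. incr_arriving k (j, i)) + (\<Sum>v | (v, j) \<in> E. decr_arriving k (v, j))"

lemma spent_eq: "spent k j = (\<Sum>i | (j, i) \<in> E. decr k (j, i)) + (\<Sum>v | (v, j) \<in> E. incr k (v, j))"
  by (simp add: spent_def sum_incident finite_E incr_def decr_def)

lemma pbal_Suc: "pb (Suc k) j = pb k j - spent k j + received k j"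
proof -
  have "(\<Sum>i | (j, i) \<in> E. fp (Suc k) (j, i))
      = (\<Sum>i | (j, i) \<in> E. fp k (j, i) - decr k (j, i) + incr_arriving k (j, i))"
    by (rule sum.cong) (simp_all add: fp_Suc)
  moreover have "(\<Sum>v | (v, j) \<in> E. f (Suc k) (v, j))
      = (\<Sum>v | (v, j) \<in> E. f k (v, j) + incr k (v, j) - decr_arriving k (v, j))"
    by (rule sum.cong) (simp_all add: f_Suc)
  ultimately show ?thesis
    by (simp add: pbal_def spent_eq received_def sum.distrib sum_subtractf)
qed

lemma spent_nonneg: "0 \<le> spent k j"
  by (simp add: spent_def sum_nonneg units_nonneg)

lemma spent_le: "j \<in> V \<Longrightarrow> spent k j \<le> max 0 (pb k j)"
  using sum_units_le_pbal[OF finite_E] ord_incident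
  by (cases "0 < pb k j") (simp_all add: spent_def units_eq_0)

lemma received_nonneg: "0 \<le> received k j"
  by (simp add: received_def sum_nonneg arriving_nonneg)

lemma incr_le_received:
  assumes "(j, i) \<in> E"
  shows "incr k (j, i) \<le> received (k + dT k (j, i)) j"
proof -
  have "incr k (j, i) \<le> incr_arriving (k + dT k (j, i)) (j, i)"
    by (rule le_arriving) simp
  also have "\<dots> \<le> (\<Sum>i' | (j, i') \<in> E. incr_arriving (k + dT k (j, i)) (j, i'))"
    using assms by (intro member_le_sum) (simp_all add: arriving_nonneg finite_heads finite_E)
  also have "\<dots> \<le> received (k + dT k (j, i)) j"
    by (simp add: received_def sum_nonneg arriving_nonneg)
  finally show ?thesis .
qed

lemma decr_le_received:
  assumes "(j, i) \<in> E"
  shows "decr k (j, i) \<le> received (k + dH k (j, i)) i"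
proof -
  have "decr k (j, i) \<le> decr_arriving (k + dH k (j, i)) (j, i)"
    by (rule le_arriving) simp
  also have "\<dots> \<le> (\<Sum>v | (v, i) \<in> E. decr_arriving (k + dH k (j, i)) (v, i))"
    using assms by (intro member_le_sum) (simp_all add: arriving_nonneg finite_tails finite_E)
  also have "\<dots> \<le> received (k + dH k (j, i)) i"
    by (simp add: received_def sum_nonneg arriving_nonneg)
  finally show ?thesis .
qed

subsection \<open>The deficit\<close>

definition deficit :: "nat \<Rightarrow> int" where
  "deficit k = (\<Sum>j\<in>V. max (- pb k j) 0)"

lemma deficit_nonneg: "0 \<le> deficit k"
  by (simp add: deficit_def sum_nonneg)

lemma neg_part_pbal_Suc_le: "j \<in> V \<Longrightarrow> max (- pb (Suc k) j) 0 \<le> max (- pb k j) 0"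
  using pbal_Suc[of k j] spent_le[of j k] spent_nonneg[of k j] received_nonneg[of k j] by linarith

lemma deficit_Suc_le: "deficit (Suc k) \<le> deficit k"
  unfolding deficit_def by (intro sum_mono neg_part_pbal_Suc_le)

text \<open>A node with negative perceived balance spends nothing, so whatever it receives is
  removed from the deficit.\<close>
lemma deficit_Suc_less:
  assumes "j \<in> V" "pb k j < 0" "0 < received k j"
  shows "deficit (Suc k) < deficit k"
  unfolding deficit_def
proof (rule sum_strict_mono_ex1[OF finite_V])
  show "\<forall>j\<in>V. max (- pb (Suc k) j) 0 \<le> max (- pb k j) 0"
    using neg_part_pbal_Suc_le by blast
  show "\<exists>j\<in>V. max (- pb (Suc k) j) 0 < max (- pb k j) 0"
    using assms pbal_Suc[of k j] spent_le[of j k] spent_nonneg[of k j] by (intro bexI[of _ j]) auto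
qed

lemma deficit_antimono: "k \<le> k' \<Longrightarrow> deficit k' \<le> deficit k"
  by (induction k' rule: dec_induct) (auto intro: order_trans[OF deficit_Suc_le])

lemma deficit_eventually_const: "\<exists>K. \<forall>k\<ge>K. deficit k = deficit K"
proof -
  obtain K where K: "\<And>k. nat (deficit K) \<le> nat (deficit k)"
    using ex_has_least_nat[of "\<lambda>k. True" 0 "\<lambda>k. nat (deficit k)"] by auto
  have "deficit k = deficit K" if "K \<le> k" for k
    using K[of k] deficit_antimono[OF that] deficit_nonneg[of k] by linarith
  then show ?thesis
    by blast
qed

text \<open>The total perceived balance is the negated total of the in-flight messages.\<close>
lemma balanced_if_no_deficit:
  assumes "deficit k = 0"
  shows "(\<forall>j\<in>V. pb k j = 0) \<and> (\<forall>e\<in>E. fp k e = f k e)"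
proof -
  have pb_nonneg: "\<forall>j\<in>V. 0 \<le> pb k j"
    using assms finite_V by (simp add: deficit_def sum_nonneg_eq_0_iff) (metis max.cobounded1 neg_le_0_iff_le)
  then have "0 \<le> (\<Sum>j\<in>V. pb k j)"
    by (simp add: sum_nonneg)
  then have "(\<Sum>e\<in>E. f k e - fp k e) \<le> 0"
    by (simp add: sum_pbal[OF finite_V edges_V] sum_subtractf)
  moreover have "\<forall>e\<in>E. 0 \<le> f k e - fp k e"
    using fp_le_f by simp
  ultimately have "\<forall>e\<in>E. fp k e = f k e"
    using sum_nonneg_eq_0_iff[OF finite_E, of "\<lambda>e. f k e - fp k e"] sum_nonneg[of E "\<lambda>e. f k e - fp k e"]
    by simp
  moreover from this have "(\<Sum>j\<in>V. pb k j) = 0"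
    using sum_pbal[OF finite_V edges_V] by (simp add: sum_subtractf[symmetric])
  ultimately show ?thesis
    using pb_nonneg sum_nonneg_eq_0_iff[OF finite_V, of "pb k"] by blast
qed

lemma f_Suc_eq_if_no_deficit:
  assumes "deficit k = 0" "deficit (Suc k) = 0" "e \<in> E"
  shows "f (Suc k) e = f k e"
proof -
  obtain j i where e: "e = (j, i)"
    by (cases e)
  then have "i \<in> V" "j \<in> V"
    using edges_V assms(3) by auto
  then have "incr k e = 0" "decr k e = 0"
    using balanced_if_no_deficit[OF assms(1)] by (simp_all add: e incr_def decr_def units_eq_0)
  then have "f (Suc k) e \<le> f k e" "fp k e \<le> fp (Suc k) e"
    using f_Suc[OF assms(3), of k] fp_Suc[OF assms(3), of k] arriving_nonneg[of "\<lambda>k0. incr k0 e"]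
      arriving_nonneg[of "\<lambda>k0. decr k0 e"] by auto
  then show ?thesis
    using balanced_if_no_deficit[OF assms(1)] balanced_if_no_deficit[OF assms(2)] assms(3) by force
qed

lemma bal_eq_0_if_no_deficit:
  assumes "deficit k = 0" "j \<in> V"
  shows "bal E (f k) j = 0"
proof -
  have "(\<Sum>i | (j, i) \<in> E. f k (j, i)) = (\<Sum>i | (j, i) \<in> E. fp k (j, i))"
    using balanced_if_no_deficit[OF assms(1)] by (intro sum.cong) simp_all
  then have "bal E (f k) j = pb k j"
    by (simp add: bal_def pbal_def)
  then show ?thesis
    using balanced_if_no_deficit[OF assms(1)] assms(2) by simp
qed

lemma flows_real_bounds:
  assumes "e \<in> E"
  shows "l e \<le> real_of_int (f k e) \<and> real_of_int (f k e) \<le> u e"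
proof -
  have "real_of_int \<lceil>l e\<rceil> \<le> real_of_int (f k e)" "real_of_int (f k e) \<le> real_of_int \<lfloor>u e\<rfloor>"
    using flows_in_bounds[OF assms, of k] by simp_all
  then show ?thesis
    using le_of_int_ceiling[of "l e"] of_int_floor_le[of "u e"] by linarith
qed

lemma converges_if_deficit_vanishes:
  assumes "\<forall>k\<ge>K. deficit k = 0"
  shows "\<forall>k\<ge>K. (\<forall>e\<in>E. f k e = f K e \<and> l e \<le> real_of_int (f k e) \<and> real_of_int (f k e) \<le> u e)
    \<and> (\<forall>j\<in>V. bal E (f k) j = 0)"
proof -
  have stable: "f k e = f K e" if "K \<le> k" "e \<in> E" for k e
    using that(1)
  proof (induction k rule: dec_induct)
    case (step k)
    then show ?case
      using f_Suc_eq_if_no_deficit assms that(2) by simp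
  qed simp
  then show ?thesis
    using assms flows_real_bounds bal_eq_0_if_no_deficit stable by blast
qed

subsection \<open>A constant positive deficit is impossible\<close>

text \<open>A node cannot skip an entry with room forever: each step with positive perceived
  balance brings its pointer strictly closer to that entry.\<close>
lemma skipped_entry_imp_eventually_nonpos:
  assumes j: "j \<in> V" and x: "x \<in> set (ord j)"
    and skipped: "\<And>k. K \<le> k \<Longrightarrow> 0 < room l u (f k) (fp k) j x
      \<and> units l u E ord (f k) (fp k) (ptr k j) j x = 0"
  shows "\<forall>\<^sub>F k in sequentially. pb k j \<le> 0"
proof -
  define n where "n = length (ord j)"
  obtain pos where pos: "pos < n" "ord j ! pos = x"
    using x by (auto simp: in_set_conv_nth n_def)
  define dist where "dist k = (int pos - int (ptr k j)) mod int n" for k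
  have n: "0 < n"
    using pos by simp
  have dist_nonneg: "0 \<le> dist k" and dist_lt: "dist k < int n" for k
    using n by (simp_all add: dist_def)
  have "dist (Suc k) \<le> dist k - (if 0 < pb k j then 1 else 0)" if k: "K \<le> k" for k
  proof (cases "0 < pb k j")
    case True
    then obtain t where t: "0 < t" "int t \<le> dist k" "ptr (Suc k) j = (ptr k j + t) mod n"
      using newptr_advance[of E "f k" "fp k" j pos ord x l u "ptr k j"] pos skipped[OF k]
      by (auto simp: ptr_Suc dist_def n_def)
    have "dist (Suc k) = (dist k - int t) mod int n"
      unfolding dist_def t(3) by (simp add: zmod_int mod_diff_right_eq mod_diff_left_eq algebra_simps)
    also have "\<dots> = dist k - int t"
      using t(2) dist_lt[of k] by (intro mod_pos_pos_trivial) simp_all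
    finally show ?thesis
      using True t(1) by simp
  next
    case False
    then show ?thesis
      by (simp add: dist_def ptr_Suc newptr_eq)
  qed
  then have "\<forall>\<^sub>F k in sequentially. \<not> 0 < pb k j"
    using dist_nonneg by (rule eventually_not_by_descent)
  then show ?thesis
    by (simp add: not_less)
qed

lemma room_nonneg:
  assumes "x \<in> incident E j"
  shows "0 \<le> room l u (f k) (fp k) j x"
proof (cases x)
  case (OutE v)
  then have "(v, j) \<in> E"
    using assms by (simp add: incident_def)
  then show ?thesis
    using flows_in_bounds[of "(v, j)" k] OutE by (simp add: room_def)
next
  case (InE i)
  then have "(j, i) \<in> E"
    using assms by (simp add: incident_def)
  then show ?thesis
    using flows_in_bounds[of "(j, i)" k] InE by (simp add: room_def)
qed

definition active :: "'v set" where
  "active = {j \<in> V. \<exists>\<^sub>F k in sequentially. 0 < pb k j}"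

lemma active_subset: "active \<subseteq> V"
  by (auto simp: active_def)

lemma passive_eventually_nonpos: "\<forall>\<^sub>F k in sequentially. \<forall>j\<in>V - active. pb k j \<le> 0"
  using finite_V by (intro eventually_ball_finite) (auto simp: active_def frequently_def not_less)

lemma active_exhausts_idle_entry:
  assumes "j \<in> active" "x \<in> incident E j"
    and idle: "\<And>k. N \<le> k \<Longrightarrow> room l u (f k) (fp k) j x = room l u (f N) (fp N) j x
      \<and> units l u E ord (f k) (fp k) (ptr k j) j x = 0"
  shows "room l u (f N) (fp N) j x = 0"
proof (rule ccontr)
  assume "room l u (f N) (fp N) j x \<noteq> 0"
  then have pos: "0 < room l u (f N) (fp N) j x"
    using room_nonneg[OF assms(2), of N] by simp
  have "j \<in> V" "x \<in> set (ord j)"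
    using assms(1,2) ord_incident by (auto simp: active_def)
  then have "\<forall>\<^sub>F k in sequentially. pb k j \<le> 0"
  proof (rule skipped_entry_imp_eventually_nonpos)
    fix k
    assume "N \<le> k"
    then show "0 < room l u (f k) (fp k) j x \<and> units l u E ord (f k) (fp k) (ptr k j) j x = 0"
      using idle[of k] pos by simp
  qed
  with assms(1) show False
    by (auto simp: active_def frequently_def not_less)
qed

context
  fixes K :: nat
  assumes deficit_const: "\<And>k. K \<le> k \<Longrightarrow> deficit k = deficit K"
begin

lemma negative_receives_nothing:
  assumes "K \<le> k" "j \<in> V" "pb k j < 0"
  shows "received k j = 0"
proof (rule ccontr)
  assume "received k j \<noteq> 0"
  then have "deficit (Suc k) < deficit k"
    using deficit_Suc_less[OF assms(2,3)] received_nonneg[of k j] by simp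
  then show False
    using deficit_const[of k] deficit_const[of "Suc k"] assms(1) by simp
qed

lemma active_nonneg:
  assumes "j \<in> active" "K \<le> k"
  shows "0 \<le> pb k j"
proof (rule ccontr)
  assume neg: "\<not> 0 \<le> pb k j"
  have j: "j \<in> V"
    using assms(1) active_subset by blast
  have stuck: "pb k' j = pb k j" if "k \<le> k'" for k'
    using that
  proof (induction k' rule: dec_induct)
    case (step k')
    then have "pb k' j < 0"
      using neg by simp
    then have "received k' j = 0" "spent k' j = 0"
      using negative_receives_nothing[of k' j] spent_le[OF j, of k'] spent_nonneg[of k' j] step(1) assms(2) j
      by simp_all
    then show ?case
      using pbal_Suc[of k' j] step.IH by simp
  qed simp
  have "\<forall>\<^sub>F k' in sequentially. \<not> 0 < pb k' j"
  proof (rule eventually_sequentiallyI)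
    fix k'
    assume "k \<le> k'"
    then show "\<not> 0 < pb k' j"
      using stuck[of k'] neg by linarith
  qed
  with assms(1) show False
    by (simp add: active_def frequently_def)
qed

lemma passive_eventually_idle: "\<forall>\<^sub>F k in sequentially. \<forall>j\<in>V - active. received k j = 0"
proof -
  have "\<forall>\<^sub>F k in sequentially. \<forall>j\<in>V - active. pb (Suc k) j \<le> 0"
    using passive_eventually_nonpos by (rule eventually_sequentially_Suc[THEN iffD2])
  then have "\<forall>\<^sub>F k in sequentially. K \<le> k \<and> (\<forall>j\<in>V - active. pb k j \<le> 0 \<and> pb (Suc k) j \<le> 0)"
    using passive_eventually_nonpos eventually_ge_at_top[of K]
    by eventually_elim auto
  then show ?thesis
  proof (rule eventually_mono, intro ballI)
    fix k j
    assume k: "K \<le> k \<and> (\<forall>j\<in>V - active. pb k j \<le> 0 \<and> pb (Suc k) j \<le> 0)" and j: "j \<in> V - active"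
    show "received k j = 0"
    proof (cases "pb k j < 0")
      case True
      then show ?thesis
        using negative_receives_nothing k j by blast
    next
      case False
      moreover have "pb k j \<le> 0" "pb (Suc k) j \<le> 0"
        using k j by auto
      ultimately show ?thesis
        using j pbal_Suc[of k j] spent_le[of j k] spent_nonneg[of k j] received_nonneg[of k j] by auto
    qed
  qed
qed

lemma eventually_quiet_off_active:
  "\<forall>\<^sub>F k in sequentially. \<forall>e\<in>E. \<not> (fst e \<in> active \<and> snd e \<in> active) \<longrightarrow> incr k e = 0 \<and> decr k e = 0"
proof -
  obtain N where N: "\<And>k j. N \<le> k \<Longrightarrow> j \<in> V - active \<Longrightarrow> pb k j \<le> 0 \<and> received k j = 0"
    using eventually_conj[OF passive_eventually_nonpos passive_eventually_idle]
    unfolding eventually_sequentially by blast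
  have "incr k (j, i) = 0 \<and> decr k (j, i) = 0"
    if k: "N \<le> k" and e: "(j, i) \<in> E" and off: "\<not> (j \<in> active \<and> i \<in> active)" for k j i
  proof -
    have ij: "j \<in> V" "i \<in> V"
      using edges_V e by auto
    have "incr k (j, i) = 0"
    proof (cases "i \<in> active")
      case False
      then show ?thesis
        using N[OF k, of i] ij by (simp add: incr_def units_eq_0)
    next
      case True
      then have "received (k + dT k (j, i)) j = 0"
        using N[of "k + dT k (j, i)" j] k off ij by simp
      then show ?thesis
        using incr_le_received[OF e, of k] incr_nonneg[of k "(j, i)"] by simp
    qed
    moreover have "decr k (j, i) = 0"
    proof (cases "j \<in> active")
      case False
      then show ?thesis
        using N[OF k, of j] ij by (simp add: decr_def units_eq_0)
    next
      case True
      then have "received (k + dH k (j, i)) i = 0"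
        using N[of "k + dH k (j, i)" i] k off ij by simp
      then show ?thesis
        using decr_le_received[OF e, of k] decr_nonneg[of k "(j, i)"] by simp
    qed
    ultimately show ?thesis ..
  qed
  then show ?thesis
    by (intro eventually_sequentiallyI[of N]) auto
qed

lemma eventually_frozen_off_active:
  "\<forall>\<^sub>F k in sequentially. \<forall>e\<in>E. \<not> (fst e \<in> active \<and> snd e \<in> active) \<longrightarrow> fp k e = f k e \<and> f (Suc k) e = f k e"
proof (rule eventually_ball_finite[OF finite_E], intro ballI)
  fix e
  assume e: "e \<in> E"
  show "\<forall>\<^sub>F k in sequentially. \<not> (fst e \<in> active \<and> snd e \<in> active) \<longrightarrow> fp k e = f k e \<and> f (Suc k) e = f k e"
  proof (cases "fst e \<in> active \<and> snd e \<in> active")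
    case False
    then have quiet: "\<forall>\<^sub>F k in sequentially. incr k e = 0" "\<forall>\<^sub>F k in sequentially. decr k e = 0"
      using eventually_quiet_off_active e by (auto elim: eventually_mono)
    have dT: "dT k e \<le> taubar" and dH: "dH k e \<le> taubar" for k
      using delays by blast+
    have "\<forall>\<^sub>F k in sequentially. incr_delivered k e = incr_sent k e"
      using quiet(1) dT by (rule eventually_delivered_eq_sent)
    moreover have "\<forall>\<^sub>F k in sequentially. decr_delivered k e = decr_sent k e"
      using quiet(2) dH by (rule eventually_delivered_eq_sent)
    moreover have "\<forall>\<^sub>F k in sequentially. decr_arriving k e = 0"
      using quiet(2) dH by (rule eventually_arriving_eq_0)
    ultimately show ?thesis
      using quiet(1)
    proof eventually_elim
      case (elim k)
      then show ?case
        using flows_eq_message_totals[OF e, of k] f_Suc[OF e, of k] by simp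
    qed
  qed simp
qed

lemma settled_off_active:
  obtains N where "\<And>k e. N \<le> k \<Longrightarrow> e \<in> E \<Longrightarrow> \<not> (fst e \<in> active \<and> snd e \<in> active)
    \<Longrightarrow> incr k e = 0 \<and> decr k e = 0 \<and> f k e = f N e \<and> fp k e = f N e"
proof -
  obtain N where N: "\<And>k e. N \<le> k \<Longrightarrow> e \<in> E \<Longrightarrow> \<not> (fst e \<in> active \<and> snd e \<in> active)
      \<Longrightarrow> incr k e = 0 \<and> decr k e = 0 \<and> fp k e = f k e \<and> f (Suc k) e = f k e"
    using eventually_conj[OF eventually_quiet_off_active eventually_frozen_off_active]
    unfolding eventually_sequentially by blast
  have const: "f k e = f N e" if "N \<le> k" and e: "e \<in> E" "\<not> (fst e \<in> active \<and> snd e \<in> active)" for k e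
    using that(1)
  proof (induction k rule: dec_induct)
    case (step k)
    then show ?case
      using N[OF _ e, of k] by simp
  qed simp
  show thesis
  proof (rule that)
    fix k e
    assume "N \<le> k" "e \<in> E" "\<not> (fst e \<in> active \<and> snd e \<in> active)"
    then show "incr k e = 0 \<and> decr k e = 0 \<and> f k e = f N e \<and> fp k e = f N e"
      using N[of k e] const[of k e] by simp
  qed
qed

text \<open>An active node must eventually use up the room on every edge to a passive node:
  otherwise its pointer would skip that entry forever.\<close>
lemma eventually_inflow_at_lower_bounds:
  "\<forall>\<^sub>F k in sequentially. \<forall>e\<in>{(j, i) \<in> E. j \<in> active \<and> i \<notin> active}. f k e = \<lceil>l e\<rceil>"
proof -
  obtain N where N: "\<And>k e. N \<le> k \<Longrightarrow> e \<in> E \<Longrightarrow> \<not> (fst e \<in> active \<and> snd e \<in> active)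
      \<Longrightarrow> incr k e = 0 \<and> decr k e = 0 \<and> f k e = f N e \<and> fp k e = f N e"
    by (rule settled_off_active) (rule that)
  have "f k (j, i) = \<lceil>l (j, i)\<rceil>"
    if k: "N \<le> k" and e: "(j, i) \<in> E" and ji: "j \<in> active" "i \<notin> active" for k j i
  proof -
    have "room l u (f N) (fp N) j (InE i) = 0"
    proof (rule active_exhausts_idle_entry[OF ji(1)])
      show "InE i \<in> incident E j"
        using e by (simp add: incident_def)
      fix k'
      assume "N \<le> k'"
      then show "room l u (f k') (fp k') j (InE i) = room l u (f N) (fp N) j (InE i)
          \<and> units l u E ord (f k') (fp k') (ptr k' j) j (InE i) = 0"
        using N[of k' "(j, i)"] N[of N "(j, i)"] e ji by (simp add: room_def decr_def)
    qed
    then show ?thesis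
      using N[OF k, of "(j, i)"] N[of N "(j, i)"] e ji by (simp add: room_def)
  qed
  then show ?thesis
    by (intro eventually_sequentiallyI[of N]) auto
qed

lemma eventually_outflow_at_upper_bounds:
  "\<forall>\<^sub>F k in sequentially. \<forall>e\<in>{(v, j) \<in> E. j \<in> active \<and> v \<notin> active}. f k e = \<lfloor>u e\<rfloor>"
proof -
  obtain N where N: "\<And>k e. N \<le> k \<Longrightarrow> e \<in> E \<Longrightarrow> \<not> (fst e \<in> active \<and> snd e \<in> active)
      \<Longrightarrow> incr k e = 0 \<and> decr k e = 0 \<and> f k e = f N e \<and> fp k e = f N e"
    by (rule settled_off_active) (rule that)
  have "f k (v, j) = \<lfloor>u (v, j)\<rfloor>"
    if k: "N \<le> k" and e: "(v, j) \<in> E" and vj: "j \<in> active" "v \<notin> active" for k v j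
  proof -
    have "room l u (f N) (fp N) j (OutE v) = 0"
    proof (rule active_exhausts_idle_entry[OF vj(1)])
      show "OutE v \<in> incident E j"
        using e by (simp add: incident_def)
      fix k'
      assume "N \<le> k'"
      then show "room l u (f k') (fp k') j (OutE v) = room l u (f N) (fp N) j (OutE v)
          \<and> units l u E ord (f k') (fp k') (ptr k' j) j (OutE v) = 0"
        using N[of k' "(v, j)"] e vj by (simp add: room_def incr_def)
    qed
    then show ?thesis
      using N[OF k, of "(v, j)"] e vj by (simp add: room_def)
  qed
  then show ?thesis
    by (intro eventually_sequentiallyI[of N]) auto
qed

lemma deficit_eq_active_balance:
  assumes k: "K \<le> k" and nonpos: "\<forall>j\<in>V - active. pb k j \<le> 0"
    and frozen: "\<forall>e\<in>E. \<not> (fst e \<in> active \<and> snd e \<in> active) \<longrightarrow> fp k e = f k e"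
  shows "deficit k = (\<Sum>j\<in>active. bal E (f k) j)"
proof -
  have "bal E (f k) j = pb k j" if "j \<in> V - active" for j
  proof -
    have "(\<Sum>i | (j, i) \<in> E. f k (j, i)) = (\<Sum>i | (j, i) \<in> E. fp k (j, i))"
      using frozen that by (intro sum.cong) auto
    then show ?thesis
      by (simp add: bal_def pbal_def)
  qed
  then have "(\<Sum>j\<in>V - active. bal E (f k) j) = (\<Sum>j\<in>V - active. pb k j)"
    by (rule sum.cong[OF refl])
  then have "(\<Sum>j\<in>active. bal E (f k) j) = (\<Sum>j\<in>V - active. - pb k j)"
    using sum_bal_eq_0[OF finite_V edges_V, of "f k"]
      sum.subset_diff[OF active_subset finite_V, of "bal E (f k)"]
    by (simp add: sum_negf)
  moreover have "(\<Sum>j\<in>active. max (- pb k j) 0) = 0"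
    using active_nonneg k by (intro sum.neutral) auto
  moreover have "(\<Sum>j\<in>V - active. max (- pb k j) 0) = (\<Sum>j\<in>V - active. - pb k j)"
    using nonpos by (intro sum.cong) auto
  ultimately show ?thesis
    unfolding deficit_def using sum.subset_diff[OF active_subset finite_V, of "\<lambda>j. max (- pb k j) 0"]
    by simp
qed

text \<open>Once the cut around the active set is saturated, the deficit is the net inflow into the
  active set, which the circulation condition makes nonpositive.\<close>
lemma deficit_vanishes:
  assumes circ: "\<forall>S\<subseteq>V. (\<Sum>e\<in>{(j, i) \<in> E. j \<in> S \<and> i \<notin> S}. \<lceil>l e\<rceil>)
    \<le> (\<Sum>e\<in>{(v, j) \<in> E. j \<in> S \<and> v \<notin> S}. \<lfloor>u e\<rfloor>)"
  shows "deficit K = 0"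
proof -
  obtain N where N: "\<And>k. N \<le> k \<Longrightarrow> (\<forall>j\<in>V - active. pb k j \<le> 0)
      \<and> (\<forall>e\<in>E. \<not> (fst e \<in> active \<and> snd e \<in> active) \<longrightarrow> fp k e = f k e \<and> f (Suc k) e = f k e)
      \<and> (\<forall>e\<in>{(j, i) \<in> E. j \<in> active \<and> i \<notin> active}. f k e = \<lceil>l e\<rceil>)
      \<and> (\<forall>e\<in>{(v, j) \<in> E. j \<in> active \<and> v \<notin> active}. f k e = \<lfloor>u e\<rfloor>)"
    using eventually_conj[OF passive_eventually_nonpos eventually_conj[OF eventually_frozen_off_active
          eventually_conj[OF eventually_inflow_at_lower_bounds eventually_outflow_at_upper_bounds]]]
    unfolding eventually_sequentially by blast
  define k where "k = max K N"
  have k: "K \<le> k" "N \<le> k"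
    by (simp_all add: k_def)
  have nonpos: "\<forall>j\<in>V - active. pb k j \<le> 0"
    and frozen: "\<forall>e\<in>E. \<not> (fst e \<in> active \<and> snd e \<in> active) \<longrightarrow> fp k e = f k e"
    and into: "\<forall>e\<in>{(j, i) \<in> E. j \<in> active \<and> i \<notin> active}. f k e = \<lceil>l e\<rceil>"
    and out: "\<forall>e\<in>{(v, j) \<in> E. j \<in> active \<and> v \<notin> active}. f k e = \<lfloor>u e\<rfloor>"
    using N[OF k(2)] by simp_all
  have finite_active: "finite active"
    using finite_V active_subset by (rule finite_subset[rotated])
  have "deficit k = (\<Sum>j\<in>active. bal E (f k) j)"
    using k(1) nonpos frozen by (rule deficit_eq_active_balance)
  also have "\<dots> = (\<Sum>e\<in>{(j, i) \<in> E. j \<in> active \<and> i \<notin> active}. \<lceil>l e\<rceil>)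
        - (\<Sum>e\<in>{(v, j) \<in> E. j \<in> active \<and> v \<notin> active}. \<lfloor>u e\<rfloor>)"
    using sum_bal_eq_cut[OF finite_active finite_E, of "f k"] into out by simp
  also have "\<dots> \<le> 0"
    using circ active_subset by auto
  finally show ?thesis
    using deficit_const[OF k(1)] deficit_nonneg[of K] by simp
qed

end

end

theorem proposition4:
  fixes V :: "'v set" and E :: "('v \<times> 'v) set"
    and l u :: "'v \<times> 'v \<Rightarrow> real"
    and ord :: "'v \<Rightarrow> 'v inc list" and p0 :: "'v \<Rightarrow> nat"
    and taubar :: nat and dT dH :: "nat \<Rightarrow> 'v \<times> 'v \<Rightarrow> nat"
    and f fp :: "nat \<Rightarrow> 'v \<times> 'v \<Rightarrow> int" and ptr :: "nat \<Rightarrow> 'v \<Rightarrow> nat"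
  assumes finV: "finite V" and cardV: "card V \<ge> 2"
    and EV: "E \<subseteq> V \<times> V" and noloop: "\<forall>v. (v, v) \<notin> E"
    and strong: "\<forall>a\<in>V. \<forall>b\<in>V. (a, b) \<in> E\<^sup>*"
    and bounds: "\<forall>e\<in>E. 1 \<le> l e \<and> l e \<le> u e"
    and ord_ok: "\<forall>j\<in>V. distinct (ord j) \<and> set (ord j) = incident E j"
    and p0_ok: "\<forall>j\<in>V. p0 j < length (ord j)"
    and delays: "\<forall>k e. dT k e \<le> taubar \<and> dH k e \<le> taubar"
    and circ_i: "\<forall>e\<in>E. \<lceil>l e\<rceil> \<le> \<lfloor>u e\<rfloor>"
    and circ_ii: "\<forall>S\<subseteq>V. (\<Sum>e\<in>{(j, i) \<in> E. j \<in> S \<and> i \<notin> S}. \<lceil>l e\<rceil>)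
                         \<le> (\<Sum>e\<in>{(v, j) \<in> E. j \<in> S \<and> v \<notin> S}. \<lfloor>u e\<rfloor>)"
    and run: "is_run l u E ord p0 dT dH f fp ptr"
  shows "\<exists>k0. \<forall>k\<ge>k0. (\<forall>e\<in>E. f k e = f k0 e \<and> l e \<le> real_of_int (f k e) \<and> real_of_int (f k e) \<le> u e)
                    \<and> (\<forall>j\<in>V. bal E (f k) j = 0)"
proof -
  interpret flow_run V E l u ord p0 taubar dT dH f fp ptr
    using finV EV ord_ok delays circ_i run by unfold_locales auto
  obtain K where K: "\<forall>k\<ge>K. deficit k = deficit K"
    using deficit_eventually_const by blast
  then have "deficit K = 0"
    using deficit_vanishes[of K] circ_ii by blast
  with K have "\<forall>k\<ge>K. deficit k = 0"
    by simp
  then show ?thesis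
    using converges_if_deficit_vanishes by blast
qed

end
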